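(* Let $\mathcal{D}_u$ be a finite set of inputs (the unlabeled pool) and let $\Omega=\mathcal{D}_u$. Fix real hyperparameters $\alpha,\beta$ with $0\le \alpha,\ \beta,\ \alpha+\beta\le 1$. Let $f:2^{\Omega}\to\mathbb{R}$ be a set function such that for every $S\subseteq\Omega$ and every $x_i\in\Omega\setminus S$, $$f(S\cup\{x_i\})-f(S)=\alpha\,VAP(x_i)+\beta\, d(S,x_i)+(1-\alpha-\beta)\,R(S,x_i),$$ where $VAP$, $d$ and $R$ are as defined in the context. Then $f$ is monotone non-decreasing, i.e. $f(S\cup\{x\})\ge f(S)$ for every $S\subseteq\Omega$ and $x\in\Omega$.
   Context: Let $h_\theta$ be a fixed classifier mapping each input $x$ to a probability vector $h_\theta(x)$ over $K$ classes (softmax output), and let $D_{KL}(p\,\|\,q)=\sum_k p_k\ln(p_k/q_k)$ denote the KL divergence. Fix $N\ge1$ and, for each input $x$, perturbations $r_1,\dots,r_N$ (with $\|r_i\|\le\epsilon$). The Virtual Adversarial Pairwise score is $$VAP(x)=\frac{1}{N^2}\Big(\sum_{i=1}^N D_{KL}(h_\theta(x)\,\|\,h_\theta(x+r_i))+\sum_{i=1}^N\sum_{j=1,j\ne i}^N D_{KL}(h_\theta(x+r_i)\,\|\,h_\theta(x+r_j))\Big).$$ The diversity score is $d(S,x_i)=\min_{x\in S} D(x,x_i)$ with $D(x_j,x_i)=D_{KL}(h_\theta(x_j)\,\|\,h_\theta(x_i))$. For inputs $x_i,x_j$ define the similarity $s_{ij}=-\ln\big(1-BC(h_\theta(x_i),h_\theta(x_j))\big)$,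 where $BC(p,q)=\sum_k\sqrt{p_kq_k}$ is the Bhattacharyya coefficient. The representativeness score is $R(S,x_i)=\sum_{x_k\in\mathcal{D}_u}\max\big(0,\ s_{ki}-\max_{x_j\in S}s_{kj}\big)$. *)

theory Defs
  imports "HOL-Analysis.Analysis"
begin

text \<open>Probability vectors over K classes are represented as functions nat \<Rightarrow> real,
  with classes indexed by 0..<K.\<close>

definition KL :: "nat \<Rightarrow> (nat \<Rightarrow> real) \<Rightarrow> (nat \<Rightarrow> real) \<Rightarrow> real" where
  "KL K p q = (\<Sum>k<K. p k * ln (p k / q k))"

definition VAP :: "nat \<Rightarrow> ('x::real_normed_vector \<Rightarrow> nat \<Rightarrow> real) \<Rightarrow> nat
    \<Rightarrow> ('x \<Rightarrow> nat \<Rightarrow> 'x) \<Rightarrow> 'x \<Rightarrow> real" where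
  "VAP K h N r x = (1 / real N ^ 2) *
     ((\<Sum>i\<in>{1..N}. KL K (h x) (h (x + r x i)))
      + (\<Sum>i\<in>{1..N}. \<Sum>j\<in>{1..N} - {i}. KL K (h (x + r x i)) (h (x + r x j))))"

definition div_score :: "nat \<Rightarrow> ('x \<Rightarrow> nat \<Rightarrow> real) \<Rightarrow> 'x set \<Rightarrow> 'x \<Rightarrow> real" where
  "div_score K h S xi = (if S = {} then 0 else Min ((\<lambda>x. KL K (h x) (h xi)) ` S))"

definition BC :: "nat \<Rightarrow> (nat \<Rightarrow> real) \<Rightarrow> (nat \<Rightarrow> real) \<Rightarrow> real" where
  "BC K p q = (\<Sum>k<K. sqrt (p k * q k))"

definition sim :: "nat \<Rightarrow> ('x \<Rightarrow> nat \<Rightarrow> real) \<Rightarrow> 'x \<Rightarrow> 'x \<Rightarrow> real" where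
  "sim K h xi xj = - ln (1 - BC K (h xi) (h xj))"

definition rep_score :: "nat \<Rightarrow> ('x \<Rightarrow> nat \<Rightarrow> real) \<Rightarrow> 'x set \<Rightarrow> 'x set \<Rightarrow> 'x \<Rightarrow> real" where
  "rep_score K h Du S xi = (\<Sum>xk\<in>Du. max 0 (sim K h xk xi -
      (if S = {} then 0 else Max ((\<lambda>xj. sim K h xk xj) ` S))))"

end

theory Submission
  imports Defs
begin

text \<open>Every marginal gain is a convex-type combination of three nonnegative scores: KL divergences
  between probability vectors are nonnegative (Gibbs' inequality, from \<open>ln t \<le> t - 1\<close>), so VAP
  and the diversity score are nonnegative, and the representativeness score is a sum of terms
  \<open>max 0 _\<close>.\<close>

lemma mult_ln_div_ge_diff:
  fixes p q :: real
  assumes "p > 0" "q > 0"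
  shows "p * ln (p / q) \<ge> p - q"
proof -
  have "ln (q / p) \<le> q / p - 1"
    using assms by (intro ln_le_minus_one) simp
  moreover have "ln (p / q) = - ln (q / p)"
    using assms by (simp add: ln_div)
  ultimately have "p * ln (p / q) \<ge> p * (1 - q / p)"
    using assms by (intro mult_left_mono) auto
  also have "p * (1 - q / p) = p - q"
    using assms by (simp add: field_simps)
  finally show ?thesis .
qed

lemma KL_nonneg:
  assumes "\<And>k. k < K \<Longrightarrow> p k > 0" and "\<And>k. k < K \<Longrightarrow> q k > 0"
    and "(\<Sum>k<K. q k) \<le> (\<Sum>k<K. p k)"
  shows "KL K p q \<ge> 0"
proof -
  have "(\<Sum>k<K. p k - q k) \<le> (\<Sum>k<K. p k * ln (p k / q k))"
    using assms(1,2) by (intro sum_mono mult_ln_div_ge_diff) auto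
  with assms(3) show ?thesis
    by (simp add: KL_def sum_subtractf)
qed

lemma VAP_nonneg:
  assumes "\<And>a b. KL K (h a) (h b) \<ge> 0"
  shows "VAP K h N r x \<ge> 0"
  unfolding VAP_def by (intro mult_nonneg_nonneg add_nonneg_nonneg sum_nonneg assms) auto

lemma div_score_nonneg:
  assumes "finite S" and "\<And>a b. KL K (h a) (h b) \<ge> 0"
  shows "div_score K h S x \<ge> 0"
  using assms by (auto simp: div_score_def Min_ge_iff)

lemma rep_score_nonneg: "rep_score K h Du S x \<ge> 0"
  unfolding rep_score_def by (intro sum_nonneg) auto

theorem lemma2:
  fixes K N :: nat and h :: "'x::real_normed_vector \<Rightarrow> nat \<Rightarrow> real"
    and r :: "'x \<Rightarrow> nat \<Rightarrow> 'x" and \<epsilon> \<alpha> \<beta> :: real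
    and Du :: "'x set" and f :: "'x set \<Rightarrow> real"
  assumes softmax_pos: "\<And>x k. k < K \<Longrightarrow> h x k > 0"
    and softmax_sum: "\<And>x. (\<Sum>k<K. h x k) = 1"
    and N: "N \<ge> 1"
    and pert: "\<And>x i. i \<in> {1..N} \<Longrightarrow> norm (r x i) \<le> \<epsilon>"
    and fin: "finite Du"
    and hyp: "0 \<le> \<alpha>" "0 \<le> \<beta>" "\<alpha> + \<beta> \<le> 1"
    and gain: "\<And>S xi. S \<subseteq> Du \<Longrightarrow> xi \<in> Du - S \<Longrightarrow>
       f (S \<union> {xi}) - f S = \<alpha> * VAP K h N r xi + \<beta> * div_score K h S xi
          + (1 - \<alpha> - \<beta>) * rep_score K h Du S xi"
  shows "\<forall>S x. S \<subseteq> Du \<and> x \<in> Du \<longrightarrow> f (S \<union> {x}) \<ge> f S"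
proof (intro allI impI)
  fix S x assume Sx: "S \<subseteq> Du \<and> x \<in> Du"
  show "f (S \<union> {x}) \<ge> f S"
  proof (cases "x \<in> S")
    case True
    then show ?thesis by (simp add: insert_absorb)
  next
    case False
    have KL: "KL K (h a) (h b) \<ge> 0" for a b
      by (rule KL_nonneg) (simp_all add: softmax_pos softmax_sum)
    have "finite S"
      using Sx fin finite_subset by blast
    then have "\<alpha> * VAP K h N r x + \<beta> * div_score K h S x
        + (1 - \<alpha> - \<beta>) * rep_score K h Du S x \<ge> 0"
      using hyp KL by (intro add_nonneg_nonneg mult_nonneg_nonneg VAP_nonneg div_score_nonneg
          rep_score_nonneg) auto
    with gain[of S x] Sx False show ?thesis by simp
  qed
qed

end
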